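(* Let $d$ be a defined $n$-ary operator and let $e_1,\ldots,e_n$ be expressions. Let $i\in\{1,\ldots,n\}$ be such that $e_i$ is rigid. Let $\mathcal{M}$ be a Kripke model and $w$ a state of $\mathcal{M}$, and let $x$ be a rigid variable that does not occur free in any $e_j$. Then $$[\![d(e_1,\ldots,e_n)]\!]^\mathcal{M}_w=[\![d(e_1,\ldots,e_{i-1},x,e_{i+1},\ldots,e_n)]\!]^{\mathcal{M}'}_w,$$ where $\mathcal{M}'$ agrees with $\mathcal{M}$ except that its valuation of rigid variables maps $x$ to $[\![e_i]\!]^\mathcal{M}_w$.
   Context: FOML syntax. Fix disjoint, non-empty, denumerable sets $\mathcal{X}$ (rigid variables), $\mathcal{V}$ (flexible variables) and $\mathcal{O}$ (operator symbols with arities). Expressions are given by $e ::= x \mid v \mid op(e,\ldots,e) \mid e=e \mid \mathrm{FALSE} \mid e\Rightarrow e \mid \forall x:e \mid \nabla e \mid d(e,\ldots,e)$, where $d$ ranges over defined operators. Only rigid variables are bound. Operator definitions. A definition has the form $d(x_1,\ldots,x_n)\triangleq e$, where: - $d$ is a fresh symbol; - $x_1,\ldots,x_n$ are pairwise distinct rigid variables; - $e$ is an expression, possibly using flexible variables and previously defined operators, whose free rigid variables are among $x_1,\ldots,x_n$. An expression is rigid iff, after all defined operators are fully expanded, it contains no flexible variable and no subexpression $\nabla e$. Semantics. A Kripke model is $\mathcal{M}=(\mathcal{I},\xi,\mathcal{W},R,\zeta,\nabla_\mathcal{M})$, where: - $\mathcal{I}$ is a first-order interpretation with distinct values $\mathsf{tt},\mathsf{ff}$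 in its universe; - $\xi:\mathcal{X}\to|\mathcal{I}|$; - $\mathcal{W}$ is a non-empty set of states and $R\subseteq\mathcal{W}^2$; - $\zeta:\mathcal{V}\times\mathcal{W}\to|\mathcal{I}|$; - $\nabla_\mathcal{M}:2^{|\mathcal{I}|}\to|\mathcal{I}|$ satisfies $\nabla_\mathcal{M}(S)=\mathsf{tt}$ iff $S\subseteq\{\mathsf{tt}\}$. Values are defined as follows. - $[\![x]\!]_w=\xi(x)$ and $[\![v]\!]_w=\zeta(v,w)$. - $[\![op(\vec e)]\!]_w=\mathcal{I}(op)(\ldots)$. - $[\![e_1=e_2]\!]_w$ is $\mathsf{tt}$ iff the values are equal, and $\mathsf{ff}$ otherwise. - $[\![\mathrm{FALSE}]\!]_w=\mathsf{ff}$. - $[\![\varphi\Rightarrow\psi]\!]_w=\mathsf{tt}$ iff $[\![\varphi]\!]_w\ne\mathsf{tt}$ or $[\![\psi]\!]_w=\mathsf{tt}$, and $\mathsf{ff}$ otherwise. - $\forall$ quantifies over the rigid variable valuation only, as usual. - $[\![\nabla\varphi]\!]_w=\nabla_\mathcal{M}(\{[\![\varphi]\!]_{w'}:(w,w')\in R\})$. - For $d(x_1,\ldots,x_n)\triangleq e$, $[\![d(e_1,\ldots,e_n)]\!]^\mathcal{M}_w=[\![e[e_1/x_1,\ldots,e_n/x_n]]\!]^\mathcal{M}_w$, using capture-avoiding substitution. *)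

theory Defs
  imports Main
begin

text \<open>Rigid variables are natural numbers (a denumerable set), flexible variables
  have type 'v, operator symbols type 'o (arities given by a function ar),
  defined operator names type 'd.\<close>

datatype ('v, 'o, 'd) expr =
    RVar nat
  | FVar 'v
  | Op 'o "('v, 'o, 'd) expr list"
  | Eq "('v, 'o, 'd) expr" "('v, 'o, 'd) expr"
  | FALSE
  | Imp "('v, 'o, 'd) expr" "('v, 'o, 'd) expr"
  | All nat "('v, 'o, 'd) expr"
  | Nabla "('v, 'o, 'd) expr"
  | Def 'd "('v, 'o, 'd) expr list"

fun fv :: "('v, 'o, 'd) expr \<Rightarrow> nat set" where
  "fv (RVar x) = {x}"
| "fv (FVar v) = {}"
| "fv (Op p es) = (\<Union>e \<in> set es. fv e)"
| "fv (Eq a b) = fv a \<union> fv b"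
| "fv FALSE = {}"
| "fv (Imp a b) = fv a \<union> fv b"
| "fv (All x e) = fv e - {x}"
| "fv (Nabla e) = fv e"
| "fv (Def d es) = (\<Union>e \<in> set es. fv e)"

definition fresh :: "nat set \<Rightarrow> nat" where
  "fresh S = Suc (Max (insert 0 S))"

fun subst :: "(nat \<Rightarrow> ('v, 'o, 'd) expr) \<Rightarrow> ('v, 'o, 'd) expr \<Rightarrow> ('v, 'o, 'd) expr" where
  "subst \<sigma> (RVar x) = \<sigma> x"
| "subst \<sigma> (FVar v) = FVar v"
| "subst \<sigma> (Op p es) = Op p (map (subst \<sigma>) es)"
| "subst \<sigma> (Eq a b) = Eq (subst \<sigma> a) (subst \<sigma> b)"
| "subst \<sigma> FALSE = FALSE"
| "subst \<sigma> (Imp a b) = Imp (subst \<sigma> a) (subst \<sigma> b)"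
| "subst \<sigma> (All x e) =
     (let C = (\<Union>z \<in> fv e - {x}. fv (\<sigma> z));
          y = (if x \<in> C then fresh (fv e \<union> C) else x)
      in All y (subst (\<sigma>(x := RVar y)) e))"
| "subst \<sigma> (Nabla e) = Nabla (subst \<sigma> e)"
| "subst \<sigma> (Def d es) = Def d (map (subst \<sigma>) es)"

definition mk_sub :: "nat list \<Rightarrow> ('v, 'o, 'd) expr list \<Rightarrow> nat \<Rightarrow> ('v, 'o, 'd) expr" where
  "mk_sub xs es = (\<lambda>z. case map_of (zip xs es) z of Some e \<Rightarrow> e | None \<Rightarrow> RVar z)"

text \<open>A definition context is a list of definitions (d, [x1..xn], e), the most
  recent one first.  find_def returns parameters, body and the older definitions.\<close>
type_synonym ('v, 'o, 'd) defs = "('d \<times> nat list \<times> ('v, 'o, 'd) expr) list"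

fun find_def :: "'d \<Rightarrow> ('v, 'o, 'd) defs \<Rightarrow> (nat list \<times> ('v, 'o, 'd) expr \<times> ('v, 'o, 'd) defs) option" where
  "find_def d [] = None"
| "find_def d ((d', xs, b) # ds) = (if d = d' then Some (xs, b, ds) else find_def d ds)"

lemma find_def_shorter:
  "find_def d ds = Some t \<Longrightarrow> length (snd (snd t)) < length ds"
  by (induction d ds rule: find_def.induct) (auto split: if_splits)

fun wf_expr :: "('o \<Rightarrow> nat) \<Rightarrow> ('v, 'o, 'd) defs \<Rightarrow> ('v, 'o, 'd) expr \<Rightarrow> bool" where
  "wf_expr ar ds (RVar x) = True"
| "wf_expr ar ds (FVar v) = True"
| "wf_expr ar ds (Op p es) = (length es = ar p \<and> (\<forall>e \<in> set es. wf_expr ar ds e))"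
| "wf_expr ar ds (Eq a b) = (wf_expr ar ds a \<and> wf_expr ar ds b)"
| "wf_expr ar ds FALSE = True"
| "wf_expr ar ds (Imp a b) = (wf_expr ar ds a \<and> wf_expr ar ds b)"
| "wf_expr ar ds (All x e) = wf_expr ar ds e"
| "wf_expr ar ds (Nabla e) = wf_expr ar ds e"
| "wf_expr ar ds (Def d es) =
     ((case find_def d ds of None \<Rightarrow> False | Some t \<Rightarrow> length es = length (fst t))
      \<and> (\<forall>e \<in> set es. wf_expr ar ds e))"

fun wf_defs :: "('o \<Rightarrow> nat) \<Rightarrow> ('v, 'o, 'd) defs \<Rightarrow> bool" where
  "wf_defs ar [] = True"
| "wf_defs ar ((d, xs, b) # ds) =
     (wf_defs ar ds \<and> find_def d ds = None \<and> distinct xs \<and> wf_expr ar ds b \<and> fv b \<subseteq> set xs)"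

function expand :: "('v, 'o, 'd) defs \<Rightarrow> ('v, 'o, 'd) expr \<Rightarrow> ('v, 'o, 'd) expr" where
  "expand ds (RVar x) = RVar x"
| "expand ds (FVar v) = FVar v"
| "expand ds (Op p es) = Op p (map (expand ds) es)"
| "expand ds (Eq a b) = Eq (expand ds a) (expand ds b)"
| "expand ds FALSE = FALSE"
| "expand ds (Imp a b) = Imp (expand ds a) (expand ds b)"
| "expand ds (All x e) = All x (expand ds e)"
| "expand ds (Nabla e) = Nabla (expand ds e)"
| "expand ds (Def d es) =
     (case find_def d ds of
        None \<Rightarrow> Def d (map (expand ds) es)
      | Some t \<Rightarrow> subst (mk_sub (fst t) (map (expand ds) es)) (expand (snd (snd t)) (fst (snd t))))"
  by pat_completeness auto
termination
  by (relation "measures [\<lambda>(ds, e). length ds, \<lambda>(ds, e). size e]")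
     (auto dest: find_def_shorter simp: le_imp_less_Suc size_list_estimation')

fun no_flex_nabla :: "('v, 'o, 'd) expr \<Rightarrow> bool" where
  "no_flex_nabla (RVar x) = True"
| "no_flex_nabla (FVar v) = False"
| "no_flex_nabla (Op p es) = (\<forall>e \<in> set es. no_flex_nabla e)"
| "no_flex_nabla (Eq a b) = (no_flex_nabla a \<and> no_flex_nabla b)"
| "no_flex_nabla FALSE = True"
| "no_flex_nabla (Imp a b) = (no_flex_nabla a \<and> no_flex_nabla b)"
| "no_flex_nabla (All x e) = no_flex_nabla e"
| "no_flex_nabla (Nabla e) = False"
| "no_flex_nabla (Def d es) = (\<forall>e \<in> set es. no_flex_nabla e)"

definition rigid :: "('v, 'o, 'd) defs \<Rightarrow> ('v, 'o, 'd) expr \<Rightarrow> bool" where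
  "rigid ds e \<longleftrightarrow> no_flex_nabla (expand ds e)"

record ('o, 'v, 'u, 's) kmodel =
  interp :: "'o \<Rightarrow> 'u list \<Rightarrow> 'u"
  tt :: 'u
  ff :: 'u
  xi :: "nat \<Rightarrow> 'u"
  W :: "'s set"
  R :: "('s \<times> 's) set"
  zeta :: "'v \<Rightarrow> 's \<Rightarrow> 'u"
  nab :: "'u set \<Rightarrow> 'u"

definition kripke_model :: "('o, 'v, 'u, 's) kmodel \<Rightarrow> bool" where
  "kripke_model M \<longleftrightarrow> tt M \<noteq> ff M \<and> W M \<noteq> {} \<and> R M \<subseteq> W M \<times> W M
     \<and> (\<forall>S. nab M S = tt M \<longleftrightarrow> S \<subseteq> {tt M})"

text \<open>sem_rel ds M e f: f maps a rigid valuation and a state to the value of e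
  (literal transcription of the paper's clauses; defined operators are evaluated by
  evaluating the substituted body).\<close>
inductive sem_rel :: "('v, 'o, 'd) defs \<Rightarrow> ('o, 'v, 'u, 's) kmodel \<Rightarrow> ('v, 'o, 'd) expr
                       \<Rightarrow> ((nat \<Rightarrow> 'u) \<Rightarrow> 's \<Rightarrow> 'u) \<Rightarrow> bool"
  for ds M where
  "sem_rel ds M (RVar x) (\<lambda>\<xi> w. \<xi> x)"
| "sem_rel ds M (FVar v) (\<lambda>\<xi> w. zeta M v w)"
| "list_all2 (sem_rel ds M) es fs \<Longrightarrow>
     sem_rel ds M (Op p es) (\<lambda>\<xi> w. interp M p (map (\<lambda>f. f \<xi> w) fs))"
| "sem_rel ds M a f \<Longrightarrow> sem_rel ds M b g \<Longrightarrow>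
     sem_rel ds M (Eq a b) (\<lambda>\<xi> w. if f \<xi> w = g \<xi> w then tt M else ff M)"
| "sem_rel ds M FALSE (\<lambda>\<xi> w. ff M)"
| "sem_rel ds M a f \<Longrightarrow> sem_rel ds M b g \<Longrightarrow>
     sem_rel ds M (Imp a b) (\<lambda>\<xi> w. if f \<xi> w \<noteq> tt M \<or> g \<xi> w = tt M then tt M else ff M)"
| "sem_rel ds M e f \<Longrightarrow>
     sem_rel ds M (All x e) (\<lambda>\<xi> w. if (\<forall>a. f (\<xi>(x := a)) w = tt M) then tt M else ff M)"
| "sem_rel ds M e f \<Longrightarrow>
     sem_rel ds M (Nabla e) (\<lambda>\<xi> w. nab M {f \<xi> w' | w'. (w, w') \<in> R M})"
| "find_def d ds = Some (xs, b, ds') \<Longrightarrow> sem_rel ds M (subst (mk_sub xs es) b) f \<Longrightarrow>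
     sem_rel ds M (Def d es) f"

definition eval :: "('v, 'o, 'd) defs \<Rightarrow> ('o, 'v, 'u, 's) kmodel \<Rightarrow> 's \<Rightarrow> ('v, 'o, 'd) expr \<Rightarrow> 'u" where
  "eval ds M w e = (THE f. sem_rel ds M e f) (xi M) w"

end

theory Submission
  imports Defs
begin

text \<open>The relational semantics evaluates a defined operator by evaluating its body with the
  arguments substituted for the parameters.  We replace it by a compositional denotation in
  which the parameters are instead bound, in the environment, to the state-dependent meanings
  of the arguments; a substitution lemma shows that both agree.  In this form, replacing the
  argument \<open>e\<^sub>i\<close> by a rigid variable x not free in the arguments changes the environment of the body
  only if the meaning of \<open>e\<^sub>i\<close> depends on the state.  It does not when
  \<open>e\<^sub>i\<close> is rigid: its full expansion contains neither flexible variables nor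
  \<open>Nabla\<close>, so its denotation under a rigid valuation is constant.\<close>

definition bind_params :: "nat list \<Rightarrow> 'a list \<Rightarrow> (nat \<Rightarrow> 'a) \<Rightarrow> nat \<Rightarrow> 'a" where
  "bind_params xs vs \<rho> z = (case map_of (zip xs vs) z of Some v \<Rightarrow> v | None \<Rightarrow> \<rho> z)"

lemma mk_sub_eq_bind_params: "mk_sub xs es = bind_params xs es RVar"
  by (simp add: mk_sub_def bind_params_def fun_eq_iff)

lemma map_of_zip_map: "map_of (zip xs (map f vs)) z = map_option f (map_of (zip xs vs) z)"
  by (induction xs arbitrary: vs) (auto simp: zip_Cons1 split: list.splits)

lemma bind_params_map: "f (bind_params xs vs \<rho> z) = bind_params xs (map f vs) (f \<circ> \<rho>) z"
  by (simp add: bind_params_def map_of_zip_map split: option.split)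

lemma bind_params_param:
  "length xs = length vs \<Longrightarrow> z \<in> set xs \<Longrightarrow> bind_params xs vs \<rho> z = bind_params xs vs \<rho>' z"
  by (auto simp: bind_params_def domIff[symmetric] dom_map_of_zip split: option.split)

lemma bind_params_cases: "bind_params xs vs \<rho> z \<in> set vs \<or> bind_params xs vs \<rho> z = \<rho> z"
  by (auto simp: bind_params_def split: option.split dest: map_of_SomeD set_zip_rightD)

definition defs_le :: "('v, 'o, 'd) defs \<Rightarrow> ('v, 'o, 'd) defs \<Rightarrow> bool" where
  "defs_le ds1 ds \<longleftrightarrow> (\<forall>d t. find_def d ds1 = Some t \<longrightarrow> find_def d ds = Some t)"

lemma wf_defs_find_def:
  "wf_defs ar ds \<Longrightarrow> find_def d ds = Some (xs, b, ds') \<Longrightarrow>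
   wf_defs ar ds' \<and> wf_expr ar ds' b \<and> fv b \<subseteq> set xs"
  by (induction d ds rule: find_def.induct) (auto split: if_splits)

lemma defs_le_find_def:
  "wf_defs ar ds \<Longrightarrow> find_def d ds = Some (xs, b, ds') \<Longrightarrow> defs_le ds' ds"
  unfolding defs_le_def
proof (induction d ds rule: find_def.induct)
  case (2 d d0 xs0 b0 ds)
  then show ?case by (auto split: if_splits)
qed simp

lemma wf_expr_defs_le: "defs_le ds1 ds \<Longrightarrow> wf_expr ar ds1 e \<Longrightarrow> wf_expr ar ds e"
  unfolding defs_le_def by (induction e) (auto split: option.splits)

lemma defs_le_trans: "defs_le ds1 ds2 \<Longrightarrow> defs_le ds2 ds3 \<Longrightarrow> defs_le ds1 ds3"
  unfolding defs_le_def by blast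

text \<open>Rigid variables denote functions of the state, so that the parameters of a definition can
  be bound to the meanings of arbitrary, possibly flexible, arguments.\<close>

function den :: "('o, 'v, 'u, 's) kmodel \<Rightarrow> ('v, 'o, 'd) defs \<Rightarrow> ('v, 'o, 'd) expr \<Rightarrow>
                 (nat \<Rightarrow> 's \<Rightarrow> 'u) \<Rightarrow> 's \<Rightarrow> 'u" where
  "den M ds (RVar x) \<rho> w = \<rho> x w"
| "den M ds (FVar v) \<rho> w = zeta M v w"
| "den M ds (Op p es) \<rho> w = interp M p (map (\<lambda>e. den M ds e \<rho> w) es)"
| "den M ds (Eq a b) \<rho> w = (if den M ds a \<rho> w = den M ds b \<rho> w then tt M else ff M)"
| "den M ds FALSE \<rho> w = ff M"
| "den M ds (Imp a b) \<rho> w =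
     (if den M ds a \<rho> w \<noteq> tt M \<or> den M ds b \<rho> w = tt M then tt M else ff M)"
| "den M ds (All x e) \<rho> w =
     (if \<forall>a. den M ds e (\<rho>(x := (\<lambda>_. a))) w = tt M then tt M else ff M)"
| "den M ds (Nabla e) \<rho> w = nab M {den M ds e \<rho> w' | w'. (w, w') \<in> R M}"
| "den M ds (Def d es) \<rho> w =
     (case find_def d ds of
        None \<Rightarrow> undefined
      | Some (xs, b, ds') \<Rightarrow> den M ds' b (bind_params xs (map (\<lambda>e. den M ds e \<rho>) es) \<rho>) w)"
  by pat_completeness auto
termination
  by (relation "measures [\<lambda>(M, ds, e, \<rho>, w). length ds, \<lambda>(M, ds, e, \<rho>, w). size e]")
     (auto dest: find_def_shorter simp: le_imp_less_Suc size_list_estimation')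

lemma den_update_xi: "den (M\<lparr>xi := X\<rparr>) ds e \<rho> w = den M ds e \<rho> w"
proof (induction M ds e \<rho> w rule: den.induct)
  case (9 M ds d es \<rho> w)
  show ?case
  proof (cases "find_def d ds")
    case (Some t)
    then obtain xs b ds' where d: "find_def d ds = Some (xs, b, ds')" by (cases t) auto
    have "map (\<lambda>e. den (M\<lparr>xi := X\<rparr>) ds e \<rho>) es = map (\<lambda>e. den M ds e \<rho>) es"
      using 9(1)[OF d refl refl] by (auto intro!: ext)
    then show ?thesis using 9(2)[OF d refl refl] d by (simp only: den.simps option.case prod.case)
  qed simp
qed (simp_all add: fun_upd_def cong: map_cong)

lemma den_cong:
  "wf_defs ar ds \<Longrightarrow> wf_expr ar ds e \<Longrightarrow> \<forall>z\<in>fv e. \<rho> z = \<rho>' z \<Longrightarrow> den M ds e \<rho> w = den M ds e \<rho>' w"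
proof (induction M ds e \<rho> w arbitrary: \<rho>' rule: den.induct)
  case (3 M ds p es \<rho> w)
  then have "map (\<lambda>e. den M ds e \<rho> w) es = map (\<lambda>e. den M ds e \<rho>' w) es" by auto
  then show ?case by (simp only: den.simps)
next
  case (4 M ds a b \<rho> w)
  then show ?case by (metis den.simps(4) UnCI fv.simps(4) wf_expr.simps(4))
next
  case (6 M ds a b \<rho> w)
  then show ?case by (metis den.simps(6) UnCI fv.simps(6) wf_expr.simps(6))
next
  case (7 M ds x e \<rho> w)
  have "den M ds e (\<rho>(x := \<lambda>_. a)) w = den M ds e (\<rho>'(x := \<lambda>_. a)) w" for a
    using 7 by (intro 7(1)) auto
  then show ?case by simp
next
  case (8 M ds e \<rho> w)
  have "den M ds e \<rho> w' = den M ds e \<rho>' w'" for w'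
    using 8 by (intro 8(1)) auto
  then show ?case by simp
next
  case (9 M ds d es \<rho> w)
  then obtain xs b ds' where d: "find_def d ds = Some (xs, b, ds')" "length es = length xs"
    by (auto split: option.splits)
  have args: "map (\<lambda>e. den M ds e \<rho>) es = map (\<lambda>e. den M ds e \<rho>') es"
    using 9(1)[OF d(1) refl refl] "9.prems" by (auto intro!: ext)
  have "\<forall>z\<in>fv b. bind_params xs (map (\<lambda>e. den M ds e \<rho>) es) \<rho> z =
                 bind_params xs (map (\<lambda>e. den M ds e \<rho>) es) \<rho>' z"
    using wf_defs_find_def[OF "9.prems"(1) d(1)] d(2) by (auto intro: bind_params_param)
  then have "den M ds' b (bind_params xs (map (\<lambda>e. den M ds e \<rho>) es) \<rho>) w =
             den M ds' b (bind_params xs (map (\<lambda>e. den M ds e \<rho>) es) \<rho>') w"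
    using 9(2)[OF d(1) refl refl] wf_defs_find_def[OF "9.prems"(1) d(1)] by blast
  then show ?case using d(1) by (simp add: args)
qed simp_all

lemma den_Def:
  assumes "wf_defs ar ds" "find_def d ds = Some (xs, b, ds')" "length es = length xs"
  shows "den M ds (Def d es) \<rho> w = den M ds' b (bind_params xs (map (\<lambda>e. den M ds e \<rho>) es) \<rho>') w"
proof -
  have wf: "wf_defs ar ds'" "wf_expr ar ds' b" "fv b \<subseteq> set xs"
    using wf_defs_find_def[OF assms(1,2)] by blast+
  have "\<forall>z\<in>fv b. bind_params xs (map (\<lambda>e. den M ds e \<rho>) es) \<rho> z =
                 bind_params xs (map (\<lambda>e. den M ds e \<rho>) es) \<rho>' z"
    by (intro ballI bind_params_param) (use wf(3) assms(3) in auto)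
  then have "den M ds' b (bind_params xs (map (\<lambda>e. den M ds e \<rho>) es) \<rho>) w =
             den M ds' b (bind_params xs (map (\<lambda>e. den M ds e \<rho>) es) \<rho>') w"
    by (rule den_cong[OF wf(1,2)])
  then show ?thesis using assms(2) by simp
qed

lemma den_defs_le:
  "defs_le ds1 ds \<Longrightarrow> wf_expr ar ds1 e \<Longrightarrow> den M ds e \<rho> w = den M ds1 e \<rho> w"
proof (induction e arbitrary: \<rho> w)
  case (Op p es)
  then have "map (\<lambda>e. den M ds e \<rho> w) es = map (\<lambda>e. den M ds1 e \<rho> w) es" by auto
  then show ?case by (simp only: den.simps)
next
  case (Def d es)
  then obtain t where t: "find_def d ds1 = Some t" "find_def d ds = Some t"
    by (auto simp: defs_le_def split: option.splits)
  have "map (\<lambda>e. den M ds e \<rho>) es = map (\<lambda>e. den M ds1 e \<rho>) es"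
    using Def by (auto intro!: ext)
  then show ?case using t by (cases t) (simp only: den.simps option.case prod.case)
qed simp_all

lemma den_mk_sub: "(\<lambda>z. den M ds (mk_sub xs es z) \<rho>) = bind_params xs (map (\<lambda>e. den M ds e \<rho>) es) \<rho>"
proof -
  have "(\<lambda>e. den M ds e \<rho>) \<circ> RVar = \<rho>" by (auto intro!: ext)
  then show ?thesis
    unfolding mk_sub_eq_bind_params using bind_params_map[where f="\<lambda>e. den M ds e \<rho>"] by auto
qed

lemma finite_fv: "finite (fv e)"
  by (induction e) auto

lemma fresh_notin: "finite S \<Longrightarrow> fresh S \<notin> S"
  unfolding fresh_def using Max_ge[of "insert 0 S"] by fastforce

lemma subst_All_capture_free:
  obtains y where "subst \<sigma> (All x e) = All y (subst (\<sigma>(x := RVar y)) e)"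
    and "\<forall>z \<in> fv e - {x}. y \<notin> fv (\<sigma> z)"
proof -
  define C where "C = (\<Union>z \<in> fv e - {x}. fv (\<sigma> z))"
  define y where "y = (if x \<in> C then fresh (fv e \<union> C) else x)"
  have "y \<notin> C"
    using fresh_notin[of "fv e \<union> C"] by (auto simp: y_def C_def finite_fv)
  then show ?thesis
    using that[of y] by (simp add: Let_def C_def y_def)
qed

lemma wf_expr_subst:
  "wf_expr ar ds b \<Longrightarrow> \<forall>z. wf_expr ar ds (\<sigma> z) \<Longrightarrow> wf_expr ar ds (subst \<sigma> b)"
proof (induction b arbitrary: \<sigma>)
  case (All x e)
  then show ?case by (simp add: Let_def)
qed (auto split: option.splits)

lemma den_subst:
  "wf_defs ar ds \<Longrightarrow> wf_expr ar ds b \<Longrightarrow> \<forall>z. wf_expr ar ds (\<sigma> z) \<Longrightarrow>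
   den M ds (subst \<sigma> b) \<rho> w = den M ds b (\<lambda>z. den M ds (\<sigma> z) \<rho>) w"
proof (induction b arbitrary: \<sigma> \<rho> w)
  case (Op p es)
  then have "map (\<lambda>e. den M ds e \<rho> w) (map (subst \<sigma>) es) =
             map (\<lambda>e. den M ds e (\<lambda>z. den M ds (\<sigma> z) \<rho>) w) es" by auto
  then show ?case by (simp only: den.simps subst.simps)
next
  case (All x e)
  obtain y where y: "subst \<sigma> (All x e) = All y (subst (\<sigma>(x := RVar y)) e)"
    "\<forall>z \<in> fv e - {x}. y \<notin> fv (\<sigma> z)"
    by (rule subst_All_capture_free)
  have "den M ds (subst (\<sigma>(x := RVar y)) e) (\<rho>(y := \<lambda>_. a)) w =
        den M ds e ((\<lambda>z. den M ds (\<sigma> z) \<rho>)(x := \<lambda>_. a)) w" for a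
  proof -
    have "\<forall>z\<in>fv e. den M ds ((\<sigma>(x := RVar y)) z) (\<rho>(y := \<lambda>_. a)) =
                   ((\<lambda>z. den M ds (\<sigma> z) \<rho>)(x := \<lambda>_. a)) z"
      using y(2) All.prems by (auto intro!: ext den_cong[OF All.prems(1)])
    then show ?thesis
      using All by (simp add: den_cong[OF All.prems(1)])
  qed
  then show ?case unfolding y(1) by simp
next
  case (Def d es)
  then obtain xs b ds' where d: "find_def d ds = Some (xs, b, ds')" "length es = length xs"
    by (auto split: option.splits)
  let ?\<rho>\<sigma> = "\<lambda>z. den M ds (\<sigma> z) \<rho>"
  have args: "map (\<lambda>e. den M ds e \<rho>) (map (subst \<sigma>) es) = map (\<lambda>e. den M ds e ?\<rho>\<sigma>) es"
    using Def by (auto intro!: ext)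
  have "den M ds (subst \<sigma> (Def d es)) \<rho> w =
        den M ds' b (bind_params xs (map (\<lambda>e. den M ds e \<rho>) (map (subst \<sigma>) es)) ?\<rho>\<sigma>) w"
    using den_Def[OF Def.prems(1) d(1), where es="map (subst \<sigma>) es" and \<rho>'="?\<rho>\<sigma>"] d(2) by simp
  also have "\<dots> = den M ds (Def d es) ?\<rho>\<sigma> w"
    unfolding args by (rule den_Def[OF Def.prems(1) d, symmetric])
  finally show ?case .
qed simp_all

lemma wf_expr_mk_sub: "\<forall>e\<in>set es. wf_expr ar ds e \<Longrightarrow> wf_expr ar ds (mk_sub xs es z)"
  using bind_params_cases[of xs es RVar z] by (auto simp: mk_sub_eq_bind_params)

lemma sem_rel_den:
  assumes "wf_defs ar ds"
  shows "sem_rel ds M e f \<Longrightarrow> wf_expr ar ds e \<Longrightarrow> f = (\<lambda>\<xi>. den M ds e (\<lambda>z _. \<xi> z))"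
proof (induction rule: sem_rel.induct)
  case (3 es fs p)
  then have "fs = map (\<lambda>e \<xi>. den M ds e (\<lambda>z _. \<xi> z)) es"
    by (auto simp: list_all2_conv_all_nth intro: nth_equalityI)
  then show ?case by (auto intro!: ext simp: comp_def)
next
  case (7 e f x)
  have upd: "(\<lambda>z _. if z = x then a else \<xi> z) = (\<lambda>z _. \<xi> z)(x := \<lambda>_. a)" for \<xi> a
    by (auto intro!: ext)
  from 7 show ?case by (auto intro!: ext simp: upd)
next
  case (9 d xs b ds' es f)
  have wf_es: "\<forall>e\<in>set es. wf_expr ar ds e" and len: "length es = length xs"
    using 9 by auto
  have wf_b: "wf_expr ar ds' b" and wf_b': "wf_expr ar ds b"
    using wf_defs_find_def[OF assms 9(1)] wf_expr_defs_le[OF defs_le_find_def[OF assms 9(1)]]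
    by blast+
  have wf_\<sigma>: "\<forall>z. wf_expr ar ds (mk_sub xs es z)"
    using wf_expr_mk_sub[OF wf_es] by blast
  have "f = (\<lambda>\<xi>. den M ds (subst (mk_sub xs es) b) (\<lambda>z _. \<xi> z))"
    using 9(3) wf_expr_subst[OF wf_b' wf_\<sigma>] by blast
  also have "\<dots> = (\<lambda>\<xi>. den M ds b (bind_params xs (map (\<lambda>e. den M ds e (\<lambda>z _. \<xi> z)) es) (\<lambda>z _. \<xi> z)))"
    by (intro ext) (simp add: den_subst[OF assms wf_b' wf_\<sigma>] den_mk_sub)
  also have "\<dots> = (\<lambda>\<xi>. den M ds' b (bind_params xs (map (\<lambda>e. den M ds e (\<lambda>z _. \<xi> z)) es) (\<lambda>z _. \<xi> z)))"
    by (intro ext) (simp add: den_defs_le[OF defs_le_find_def[OF assms 9(1)] wf_b])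
  also have "\<dots> = (\<lambda>\<xi>. den M ds (Def d es) (\<lambda>z _. \<xi> z))"
    by (intro ext) (rule den_Def[OF assms 9(1) len, symmetric])
  finally show ?case .
qed (auto intro!: ext)

text \<open>The body of a definition is evaluated after substitution, which is not a structurally
  smaller expression; hence the induction over the definition context with the substitution
  generalized.\<close>

lemma sem_rel_subst_exists:
  assumes "defs_le ds1 ds" "wf_defs ar ds1" "wf_expr ar ds1 b" "\<forall>z. \<exists>f. sem_rel ds M (\<sigma> z) f"
  shows "\<exists>f. sem_rel ds M (subst \<sigma> b) f"
  using assms
proof (induction "length ds1" arbitrary: ds1 b \<sigma> rule: less_induct)
  case less
  from less.prems show ?case
  proof (induction b arbitrary: \<sigma>)
    case (Op p es)
    then have "sem_rel ds M (subst \<sigma> e) (SOME f. sem_rel ds M (subst \<sigma> e) f)" if "e \<in> set es" for e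
      using that by (intro someI_ex[of "sem_rel ds M (subst \<sigma> e)"]) simp
    then have "list_all2 (sem_rel ds M) (map (subst \<sigma>) es)
                 (map (\<lambda>e. SOME f. sem_rel ds M (subst \<sigma> e) f) es)"
      by (simp add: list.rel_map list_all2_same)
    then show ?case by (auto intro: sem_rel.intros)
  next
    case (Eq a c)
    then have "\<exists>f. sem_rel ds M (subst \<sigma> a) f" "\<exists>g. sem_rel ds M (subst \<sigma> c) g" by simp_all
    then show ?case by (auto intro: sem_rel.intros(4))
  next
    case (Imp a c)
    then have "\<exists>f. sem_rel ds M (subst \<sigma> a) f" "\<exists>g. sem_rel ds M (subst \<sigma> c) g" by simp_all
    then show ?case by (auto intro: sem_rel.intros(6))
  next
    case (Nabla e)
    then have "\<exists>f. sem_rel ds M (subst \<sigma> e) f" by simp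
    then show ?case by (auto intro: sem_rel.intros(8))
  next
    case (All x e)
    obtain y where y: "subst \<sigma> (All x e) = All y (subst (\<sigma>(x := RVar y)) e)"
      using subst_All_capture_free by blast
    have "\<exists>f. sem_rel ds M (subst (\<sigma>(x := RVar y)) e) f"
      using All by (intro All.IH) (auto intro: sem_rel.intros)
    then show ?case unfolding y by (blast intro: sem_rel.intros(7))
  next
    case (Def d es)
    from Def.prems(3) obtain xs b ds' where d: "find_def d ds1 = Some (xs, b, ds')"
      by (auto split: option.splits)
    have args: "\<exists>f. sem_rel ds M (subst \<sigma> e) f" if "e \<in> set es" for e
      using Def that by simp
    have "\<exists>f. sem_rel ds M (mk_sub xs (map (subst \<sigma>) es) z) f" for z
      using bind_params_cases[of xs "map (subst \<sigma>) es" RVar z] args sem_rel.intros(1)[of ds M z]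
      by (auto simp: mk_sub_eq_bind_params)
    moreover have "defs_le ds' ds"
      using defs_le_trans[OF defs_le_find_def[OF Def.prems(2) d] Def.prems(1)] .
    ultimately have "\<exists>f. sem_rel ds M (subst (mk_sub xs (map (subst \<sigma>) es)) b) f"
      using less.hyps find_def_shorter[OF d] wf_defs_find_def[OF Def.prems(2) d] by simp
    moreover have "find_def d ds = Some (xs, b, ds')"
      using Def.prems(1) d by (simp add: defs_le_def)
    ultimately show ?case by (auto intro: sem_rel.intros)
  qed (auto intro: sem_rel.intros)
qed

lemma subst_RVar: "subst RVar e = e"
  by (induction e) (simp_all add: Let_def fun_upd_idem map_idI)

lemma eval_den:
  assumes "wf_defs ar ds" "wf_expr ar ds e"
  shows "eval ds M w e = den M ds e (\<lambda>z _. xi M z) w"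
proof -
  have "defs_le ds ds" by (simp add: defs_le_def)
  then obtain f where "sem_rel ds M e f"
    using sem_rel_subst_exists[OF _ assms, of ds M RVar] subst_RVar[of e]
    by (auto intro: sem_rel.intros)
  then have "(THE f. sem_rel ds M e f) = (\<lambda>\<xi>. den M ds e (\<lambda>z _. \<xi> z))"
    using sem_rel_den[OF assms(1)] assms(2) by (blast intro: the_equality)
  then show ?thesis unfolding eval_def by simp
qed

lemma wf_expr_expand:
  "wf_defs ar ds \<Longrightarrow> wf_expr ar ds e \<Longrightarrow> wf_expr ar [] (expand ds e)"
proof (induction ds e rule: expand.induct)
  case (9 ds d es)
  from "9.prems"(2) obtain xs b ds' where d: "find_def d ds = Some (xs, b, ds')"
    by (auto split: option.splits)
  have "wf_expr ar [] (expand ds' b)"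
    using 9(3)[OF d] wf_defs_find_def[OF "9.prems"(1) d] by simp
  moreover have "\<forall>e\<in>set (map (expand ds) es). wf_expr ar [] e"
    using 9(2)[OF d] "9.prems" by auto
  ultimately show ?case
    using d by (simp add: wf_expr_subst wf_expr_mk_sub)
qed auto

lemma den_expand:
  "wf_defs ar ds \<Longrightarrow> wf_expr ar ds e \<Longrightarrow> den M [] (expand ds e) \<rho> w = den M ds e \<rho> w"
proof (induction ds e arbitrary: \<rho> w rule: expand.induct)
  case (3 ds p es)
  then have "map (\<lambda>e. den M [] e \<rho> w) (map (expand ds) es) = map (\<lambda>e. den M ds e \<rho> w) es"
    by auto
  then show ?case by (simp only: den.simps expand.simps)
next
  case (9 ds d es)
  from "9.prems"(2) obtain xs b ds' where d: "find_def d ds = Some (xs, b, ds')"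
    and len: "length es = length xs"
    by (auto split: option.splits)
  have wf_b: "wf_defs ar ds'" "wf_expr ar ds' b"
    using wf_defs_find_def[OF "9.prems"(1) d] by blast+
  have wf_es: "\<forall>e\<in>set (map (expand ds) es). wf_expr ar [] e"
    using wf_expr_expand "9.prems" by auto
  have args: "map (\<lambda>e. den M [] e \<rho>) (map (expand ds) es) = map (\<lambda>e. den M ds e \<rho>) es"
    using 9(2)[OF d] "9.prems" by (auto intro!: ext)
  let ?\<sigma> = "mk_sub xs (map (expand ds) es)"
  have "den M [] (expand ds (Def d es)) \<rho> w = den M [] (subst ?\<sigma> (expand ds' b)) \<rho> w"
    using d by simp
  also have "\<dots> = den M [] (expand ds' b) (\<lambda>z. den M [] (?\<sigma> z) \<rho>) w"
    using wf_expr_expand[OF wf_b] wf_expr_mk_sub[OF wf_es] by (intro den_subst) auto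
  also have "\<dots> = den M ds' b (bind_params xs (map (\<lambda>e. den M ds e \<rho>) es) \<rho>) w"
    unfolding den_mk_sub args using 9(3)[OF d] wf_b by simp
  also have "\<dots> = den M ds (Def d es) \<rho> w"
    by (rule den_Def[OF "9.prems"(1) d len, symmetric])
  finally show ?case .
qed (simp_all add: fun_upd_def)

text \<open>In the empty definition context a defined operator denotes the junk value
  \<open>undefined\<close>, which is state-independent as well.\<close>

lemma den_no_flex_nabla_state_independent:
  "no_flex_nabla e \<Longrightarrow> den M [] e (\<lambda>z _. \<xi> z) w = den M [] e (\<lambda>z _. \<xi> z) w'"
proof (induction e arbitrary: \<xi>)
  case (Op p es)
  then have "map (\<lambda>e. den M [] e (\<lambda>z _. \<xi> z) w) es = map (\<lambda>e. den M [] e (\<lambda>z _. \<xi> z) w') es"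
    by auto
  then show ?case by (simp only: den.simps)
next
  case (All x e)
  have upd: "(\<lambda>z _. (\<xi>(x := a)) z) = (\<lambda>z _. \<xi> z)(x := \<lambda>_. a)" for a
    by (auto intro!: ext)
  have "den M [] e ((\<lambda>z _. \<xi> z)(x := \<lambda>_. a)) w = den M [] e ((\<lambda>z _. \<xi> z)(x := \<lambda>_. a)) w'" for a
    using All.IH[of "\<xi>(x := a)"] All.prems by (simp only: upd no_flex_nabla.simps)
  then show ?case by simp
qed simp_all

lemma den_rigid_state_independent:
  assumes "wf_defs ar ds" "wf_expr ar ds e" "rigid ds e"
  shows "den M ds e (\<lambda>z _. \<xi> z) w = den M ds e (\<lambda>z _. \<xi> z) w'"
  using den_no_flex_nabla_state_independent[of "expand ds e" M \<xi> w w'] assms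
  by (simp add: rigid_def den_expand)

lemma map_den_list_update_RVar:
  assumes "wf_defs ar ds" "\<forall>e\<in>set es. wf_expr ar ds e \<and> x \<notin> fv e" "i < length es"
  shows "map (\<lambda>e. den M ds e (\<rho>(x := den M ds (es ! i) \<rho>))) (es[i := RVar x]) =
         map (\<lambda>e. den M ds e \<rho>) es"
proof (rule nth_equalityI)
  fix j assume "j < length (map (\<lambda>e. den M ds e (\<rho>(x := den M ds (es ! i) \<rho>))) (es[i := RVar x]))"
  then have j: "j < length es" by simp
  show "map (\<lambda>e. den M ds e (\<rho>(x := den M ds (es ! i) \<rho>))) (es[i := RVar x]) ! j =
        map (\<lambda>e. den M ds e \<rho>) es ! j"
  proof (cases "j = i")
    case False
    have "den M ds (es ! j) (\<rho>(x := den M ds (es ! i) \<rho>)) = den M ds (es ! j) \<rho>"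
      using assms(2) j by (intro ext den_cong[OF assms(1)]) auto
    with False j show ?thesis by simp
  qed (use assms(3) in \<open>auto intro!: ext\<close>)
qed simp

lemma den_Def_list_update_RVar:
  assumes "wf_defs ar ds" "find_def d ds = Some (xs, b, ds')" "length es = length xs"
    and "\<forall>e\<in>set es. wf_expr ar ds e \<and> x \<notin> fv e" "i < length es"
  shows "den M ds (Def d (es[i := RVar x])) (\<rho>(x := den M ds (es ! i) \<rho>)) w = den M ds (Def d es) \<rho> w"
proof -
  have "den M ds (Def d (es[i := RVar x])) (\<rho>(x := den M ds (es ! i) \<rho>)) w =
        den M ds' b (bind_params xs
          (map (\<lambda>e. den M ds e (\<rho>(x := den M ds (es ! i) \<rho>))) (es[i := RVar x])) \<rho>) w"
    using assms(3) by (intro den_Def[OF assms(1,2)]) simp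
  also have "\<dots> = den M ds' b (bind_params xs (map (\<lambda>e. den M ds e \<rho>) es) \<rho>) w"
    unfolding map_den_list_update_RVar[OF assms(1,4,5)] ..
  also have "\<dots> = den M ds (Def d es) \<rho> w"
    by (rule den_Def[OF assms(1-3), symmetric])
  finally show ?thesis .
qed

theorem lemma1:
  fixes ar :: "'o \<Rightarrow> nat"
    and ds :: "('v, 'o, 'd) defs"
    and M :: "('o, 'v, 'u, 's) kmodel"
  assumes "wf_defs ar ds"
    and "find_def d ds = Some (xs, b, ds')"
    and "length es = length xs"
    and "\<forall>j < length es. wf_expr ar ds (es ! j)"
    and "i < length es"
    and "rigid ds (es ! i)"
    and "kripke_model M"
    and "w \<in> W M"
    and "\<forall>j < length es. x \<notin> fv (es ! j)"
  shows "eval ds M w (Def d es) =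
         eval ds (M\<lparr>xi := (xi M)(x := eval ds M w (es ! i))\<rparr>) w (Def d (es[i := RVar x]))"
proof -
  define \<rho> where "\<rho> = (\<lambda>z (_::'s). xi M z)"
  define v where "v = eval ds M w (es ! i)"
  have wf_es: "\<forall>e\<in>set es. wf_expr ar ds e \<and> x \<notin> fv e"
    using assms(4,9) by (auto simp: in_set_conv_nth)
  have wf_Def: "wf_expr ar ds (Def d es)" "wf_expr ar ds (Def d (es[i := RVar x]))"
    using assms(2,3) wf_es set_update_subset_insert[of es i "RVar x"] by auto
  have wf_i: "wf_expr ar ds (es ! i)"
    using assms(4,5) by blast
  have "den M ds (es ! i) \<rho> w' = v" for w'
    unfolding v_def eval_den[OF assms(1) wf_i] \<rho>_def
    by (rule den_rigid_state_independent[OF assms(1) wf_i assms(6)])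
  then have "(\<lambda>z _. xi (M\<lparr>xi := (xi M)(x := v)\<rparr>) z) = \<rho>(x := den M ds (es ! i) \<rho>)"
    by (auto intro!: ext simp: \<rho>_def)
  then have "eval ds (M\<lparr>xi := (xi M)(x := v)\<rparr>) w (Def d (es[i := RVar x])) =
             den M ds (Def d es) \<rho> w"
    unfolding eval_den[OF assms(1) wf_Def(2)] den_update_xi
    using den_Def_list_update_RVar[OF assms(1-3) wf_es assms(5)] by simp
  then show ?thesis
    unfolding v_def eval_den[OF assms(1) wf_Def(1)] \<rho>_def by simp
qed

end
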